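(* Let $X$ be a Tychonoff space and let $cX$, $dX$ be compactifications of $X$ with $dX\preceq cX$, witnessed by a continuous map $\varphi: cX\to dX$. Suppose $X$ is an $F_{\sigma\delta}$ subset of $cX$ and that the family $\mathcal F(cX,dX)$ is at most countable. Then $X$ is an $F_{\sigma\delta}$ subset of $dX$.
   Context: A compactification of $X$ is a pair $(cX,\varphi_c)$ with $cX$ compact Hausdorff and $\varphi_c$ a homeomorphic embedding of $X$ onto a dense subspace of $cX$; we identify $X$ with its image in $cX$ (and in $dX$). We write $dX\preceq cX$ if there exists a continuous map $\varphi:cX\to dX$ with $\varphi_d=\varphi\circ\varphi_c$. For such $\varphi$, $\mathcal F(cX,dX):=\{\varphi^{-1}(x) : x\in dX,\ \varphi^{-1}(x)\text{ is not a singleton}\}$. An $F_{\sigma\delta}$ set is a countable intersection of countable unions of closed sets. *)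

theory Defs
  imports "HOL-Analysis.Analysis"
begin

definition fsigmadelta_in :: "'a topology \<Rightarrow> 'a set \<Rightarrow> bool" where
  "fsigmadelta_in X \<equiv> (countable intersection_of fsigma_in X) relative_to topspace X"

text \<open>Tychonoff = completely regular + Hausdorff (T1 would be equivalent).\<close>
definition Tychonoff_space :: "'a topology \<Rightarrow> bool" where
  "Tychonoff_space X \<longleftrightarrow> completely_regular_space X \<and> Hausdorff_space X"

definition compactification :: "'a topology \<Rightarrow> 'b topology \<Rightarrow> ('a \<Rightarrow> 'b) \<Rightarrow> bool" where
  "compactification X K e \<longleftrightarrow> compact_space K \<and> Hausdorff_space K \<and>
     embedding_map X K e \<and> K closure_of (e ` topspace X) = topspace K"

definition nontrivial_fibres :: "'b topology \<Rightarrow> 'c topology \<Rightarrow> ('b \<Rightarrow> 'c) \<Rightarrow> 'b set set" where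
  "nontrivial_fibres cX dX \<phi> =
     {{z \<in> topspace cX. \<phi> z = y} | y. y \<in> topspace dX \<and>
        \<not> (\<exists>a. {z \<in> topspace cX. \<phi> z = y} = {a})}"

end

theory Submission
  imports Defs
begin

text \<open>Write the $F_{\sigma\delta}$ set as $A = \bigcap_n \bigcup_m G_{n,m}$ with closed $G_{n,m}$
  in the compact space $cX$. A closed set $C$ missing $A$ is missed by the countably many finite
  intersections $G_{0,m_0} \cap \dots \cap G_{k,m_k}$ that avoid $C$, and by compactness every
  point of $A$ lies in one of them; so $A$ is contained in an $F_\sigma$ set disjoint from $C$.
  Continuous images of $F_\sigma$ sets from $cX$ into $dX$ are again $F_\sigma$, and $X$ is cut
  out of $dX$ by the images of the $F_\sigma$ sets defining it in $cX$ (which handles the points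
  of $dX$ with a singleton fibre) together with the images of $F_\sigma$ supersets of $X$
  avoiding each of the countably many nontrivial fibres outside $X$.\<close>

lemma fsigmadelta_in_explicit:
  "fsigmadelta_in X A \<longleftrightarrow>
     (\<exists>\<U>. countable \<U> \<and> (\<forall>U\<in>\<U>. fsigma_in X U) \<and> A = topspace X \<inter> \<Inter>\<U>)"
  unfolding fsigmadelta_in_def relative_to_def intersection_of_def by blast

lemma fsigmadelta_in_Inter_Union_closedin:
  fixes X :: "'a topology"
  assumes "fsigmadelta_in X A"
  obtains G :: "nat \<Rightarrow> nat \<Rightarrow> 'a set"
  where "\<And>n m. closedin X (G n m)" and "A = (\<Inter>n. \<Union>m. G n m)"
proof -
  obtain \<U> where \<U>: "countable \<U>" "\<And>U. U \<in> \<U> \<Longrightarrow> fsigma_in X U" "A = topspace X \<inter> \<Inter>\<U>"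
    using assms unfolding fsigmadelta_in_explicit by blast
  define g where "g = from_nat_into (insert (topspace X) \<U>)"
  have range_g: "range g = insert (topspace X) \<U>"
    unfolding g_def using \<U>(1) by simp
  have "\<forall>n. \<exists>C :: nat \<Rightarrow> 'a set. (\<forall>m. closedin X (C m)) \<and> \<Union>(range C) = g n"
  proof
    fix n
    have "g n \<in> insert (topspace X) \<U>"
      using range_g by blast
    then have "fsigma_in X (g n)"
      using \<U>(2) by auto
    then show "\<exists>C :: nat \<Rightarrow> 'a set. (\<forall>m. closedin X (C m)) \<and> \<Union>(range C) = g n"
      unfolding fsigma_in_ascending by blast
  qed
  then obtain G :: "nat \<Rightarrow> nat \<Rightarrow> 'a set"
    where G: "\<And>n m. closedin X (G n m)" "\<And>n. \<Union>(range (G n)) = g n"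
    by (metis choice)
  have "A = (\<Inter>n. \<Union>m. G n m)"
    using \<U>(3) range_g G(2) by simp
  with G(1) show thesis
    by (rule that)
qed

lemma compact_space_Int_INT_lessThan_eq_empty:
  fixes D :: "nat \<Rightarrow> 'a set"
  assumes K: "compact_space K" and C: "closedin K C" and D: "\<And>i. closedin K (D i)"
    and disj: "C \<inter> (\<Inter>i. D i) = {}"
  obtains n where "C \<inter> (\<Inter>i<n. D i) = {}"
proof -
  define H where "H n = C \<inter> (\<Inter>i<n. D i)" for n
  have "\<exists>n. H n = {}"
  proof (rule ccontr)
    assume "\<nexists>n. H n = {}"
    moreover have "decseq H"
      unfolding decseq_def H_def by auto
    moreover have "closedin K (H n)" for n
    proof (cases "n = 0")
      case False
      then show ?thesis
        unfolding H_def using C D by (intro closedin_Int closedin_INT) auto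
    qed (simp add: H_def C)
    ultimately have "(\<Inter>n. H n) \<noteq> {}"
      using compact_space_imp_nest[OF K] by blast
    moreover have "(\<Inter>n. H n) \<subseteq> C \<inter> (\<Inter>i. D i)"
      unfolding H_def by blast
    ultimately show False
      using disj by (metis subset_empty)
  qed
  then obtain n where "H n = {}"
    by blast
  then show thesis
    by (intro that[of n]) (simp add: H_def)
qed

lemma fsigmadelta_in_disjoint_closedin_imp_fsigma_superset:
  fixes K :: "'a topology"
  assumes K: "compact_space K" and A: "fsigmadelta_in K A"
    and C: "closedin K C" and disj: "A \<inter> C = {}"
  obtains F where "fsigma_in K F" and "A \<subseteq> F" and "F \<inter> C = {}"
proof -
  obtain G :: "nat \<Rightarrow> nat \<Rightarrow> 'a set"
    where G: "\<And>n m. closedin K (G n m)" and AG: "A = (\<Inter>n. \<Union>m. G n m)"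
    using fsigmadelta_in_Inter_Union_closedin[OF A] by blast
  define B where "B s = topspace K \<inter> (\<Inter>i<length s. G i (s ! i))" for s :: "nat list"
  have closed_B: "closedin K (B s)" for s
  proof -
    have "closedin K (\<Inter>(insert (topspace K) ((\<lambda>i. G i (s ! i)) ` {..<length s})))"
      using G by (intro closedin_Inter) auto
    moreover have "B s = \<Inter>(insert (topspace K) ((\<lambda>i. G i (s ! i)) ` {..<length s}))"
      unfolding B_def by simp
    ultimately show ?thesis
      by (simp only:)
  qed
  define F where "F = \<Union>(B ` {s. B s \<inter> C = {}})"
  have "fsigma_in K F"
    unfolding F_def using closed_B
    by (intro fsigma_in_Union) (auto intro: closed_imp_fsigma_in)
  moreover have "A \<subseteq> F"
  proof
    fix y assume "y \<in> A"
    then have "\<forall>n. \<exists>m. y \<in> G n m"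
      unfolding AG by blast
    then obtain \<sigma> where \<sigma>: "\<And>n. y \<in> G n (\<sigma> n)"
      by (metis choice)
    have "C \<inter> (\<Inter>i. G i (\<sigma> i)) = {}"
      using disj unfolding AG by blast
    then obtain n where "C \<inter> (\<Inter>i<n. G i (\<sigma> i)) = {}"
      using compact_space_Int_INT_lessThan_eq_empty[OF K C, of "\<lambda>i. G i (\<sigma> i)"] G by blast
    then have "C \<inter> B (map \<sigma> [0..<n]) = {}"
      unfolding B_def by auto
    moreover have "y \<in> B (map \<sigma> [0..<n])"
      using \<sigma> closedin_subset[OF G] unfolding B_def by auto
    ultimately show "y \<in> F"
      unfolding F_def by blast
  qed
  moreover have "F \<inter> C = {}"
    unfolding F_def by blast
  ultimately show thesis
    using that by blast
qed

lemma fsigma_in_continuous_image: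
  fixes K :: "'a topology"
  assumes "compact_space K" and "kc_space L" and "continuous_map K L f"
    and "fsigma_in K S"
  shows "fsigma_in L (f ` S)"
proof -
  obtain C :: "nat \<Rightarrow> 'a set" where C: "\<And>n. closedin K (C n)" and S: "S = \<Union>(range C)"
    using assms(4) unfolding fsigma_in_ascending by blast
  have "closedin L (f ` C n)" for n
    using continuous_imp_closed_map_gen[OF assms(1,2,3)] C unfolding closed_map_def by blast
  then show ?thesis
    unfolding S image_UN by (intro fsigma_in_Union) (auto intro: closed_imp_fsigma_in)
qed

lemma closedin_fibre:
  assumes "t1_space L" and "continuous_map K L f" and "w \<in> topspace L"
  shows "closedin K {x \<in> topspace K. f x = w}"
proof -
  have "closedin L {w}"
    using assms(1,3) by (simp add: t1_space_closedin_singleton)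
  then have "closedin K {x \<in> topspace K. f x \<in> {w}}"
    by (rule closedin_continuous_map_preimage[OF assms(2)])
  then show ?thesis
    by simp
qed

lemma image_eq_Int_Inter_image_of_separating_family:
  assumes "f ` A \<subseteq> T" and "\<And>S. S \<in> \<S> \<Longrightarrow> A \<subseteq> S \<and> S \<subseteq> D"
    and "\<And>w. \<lbrakk>w \<in> T; w \<notin> f ` A\<rbrakk> \<Longrightarrow> \<exists>S\<in>\<S>. S \<inter> {x \<in> D. f x = w} = {}"
  shows "f ` A = T \<inter> \<Inter>((`) f ` \<S>)"
proof
  show "f ` A \<subseteq> T \<inter> \<Inter>((`) f ` \<S>)"
    using assms(1,2) by blast
  show "T \<inter> \<Inter>((`) f ` \<S>) \<subseteq> f ` A"
  proof (rule subsetI, rule ccontr)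
    fix w assume w: "w \<in> T \<inter> \<Inter>((`) f ` \<S>)" "w \<notin> f ` A"
    then obtain S where S: "S \<in> \<S>" "S \<inter> {x \<in> D. f x = w} = {}"
      using assms(3)[of w] by blast
    then have "w \<in> f ` S"
      using w(1) by blast
    then obtain x where "x \<in> S" "f x = w"
      by blast
    with S assms(2)[OF S(1)] show False
      by blast
  qed
qed

theorem fsigmadelta_in_continuous_image:
  assumes K: "compact_space K" and L: "kc_space L" and f: "continuous_map K L f"
    and A: "fsigmadelta_in K A" and countable_fibres: "countable (nontrivial_fibres K L f)"
  shows "fsigmadelta_in L (f ` A)"
proof -
  obtain \<U> where \<U>: "countable \<U>" "\<And>U. U \<in> \<U> \<Longrightarrow> fsigma_in K U" "A = topspace K \<inter> \<Inter>\<U>"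
    using A unfolding fsigmadelta_in_explicit by blast
  define \<Q> where "\<Q> = {P \<in> nontrivial_fibres K L f. P \<inter> A = {}}"
  have "countable \<Q>"
    using countable_fibres unfolding \<Q>_def by (rule countable_subset[rotated]) auto
  have "\<exists>F. fsigma_in K F \<and> A \<subseteq> F \<and> F \<inter> P = {}" if P: "P \<in> \<Q>" for P
  proof -
    have "closedin K P" "A \<inter> P = {}"
      using P closedin_fibre[OF kc_imp_t1_space[OF L] f]
      unfolding \<Q>_def nontrivial_fibres_def by auto
    then obtain F where "fsigma_in K F" "A \<subseteq> F" "F \<inter> P = {}"
      using fsigmadelta_in_disjoint_closedin_imp_fsigma_superset[OF K A] by blast
    then show ?thesis
      by blast
  qed
  then obtain F where F: "\<And>P. P \<in> \<Q> \<Longrightarrow> fsigma_in K (F P) \<and> A \<subseteq> F P \<and> F P \<inter> P = {}"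
    by (metis bchoice)
  define \<S> where "\<S> = \<U> \<union> F ` \<Q>"
  have \<S>: "countable \<S>" "\<And>S. S \<in> \<S> \<Longrightarrow> fsigma_in K S \<and> A \<subseteq> S"
    unfolding \<S>_def using \<U> F \<open>countable \<Q>\<close> by auto
  have separating: "\<exists>S\<in>\<S>. S \<inter> {x \<in> topspace K. f x = w} = {}"
    if w: "w \<in> topspace L" "w \<notin> f ` A" for w
  proof (cases "\<exists>a. {x \<in> topspace K. f x = w} = {a}")
    case True
    then obtain a where a: "{x \<in> topspace K. f x = w} = {a}" ..
    then have a_fibre: "a \<in> topspace K" "f a = w"
      by auto
    with w have "a \<notin> A"
      by blast
    then obtain U where "U \<in> \<U>" "a \<notin> U"
      using \<U>(3) a_fibre by blast
    then show ?thesis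
      unfolding \<S>_def a by (intro bexI[of _ U]) auto
  next
    case False
    then have "{x \<in> topspace K. f x = w} \<in> \<Q>"
      using w unfolding \<Q>_def nontrivial_fibres_def by blast
    then show ?thesis
      unfolding \<S>_def using F by (intro bexI[of _ "F {x \<in> topspace K. f x = w}"]) auto
  qed
  have "f ` A = topspace L \<inter> \<Inter>((`) f ` \<S>)"
  proof (rule image_eq_Int_Inter_image_of_separating_family)
    show "f ` A \<subseteq> topspace L"
      using \<U>(3) continuous_map_image_subset_topspace[OF f] by blast
    show "A \<subseteq> S \<and> S \<subseteq> topspace K" if "S \<in> \<S>" for S
      using \<S>(2)[OF that] fsigma_in_subset by blast
  qed (rule separating)
  then show ?thesis
    unfolding fsigmadelta_in_explicit using \<S> K L f
    by (intro exI[of _ "(`) f ` \<S>"]) (auto intro: fsigma_in_continuous_image)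
qed

theorem corollary3p4:
  fixes X :: "'a topology" and cX :: "'b topology" and dX :: "'c topology"
    and ec :: "'a \<Rightarrow> 'b" and ed :: "'a \<Rightarrow> 'c" and \<phi> :: "'b \<Rightarrow> 'c"
  assumes "Tychonoff_space X"
    and "compactification X cX ec"
    and "compactification X dX ed"
    and "continuous_map cX dX \<phi>"
    and "\<And>x. x \<in> topspace X \<Longrightarrow> \<phi> (ec x) = ed x"
    and "fsigmadelta_in cX (ec ` topspace X)"
    and "countable (nontrivial_fibres cX dX \<phi>)"
  shows "fsigmadelta_in dX (ed ` topspace X)"
proof -
  have "ed ` topspace X = \<phi> ` ec ` topspace X"
    using assms(5) by (simp add: image_image)
  moreover have "compact_space cX" "kc_space dX"
    using assms(2,3) Hausdorff_imp_kc_space unfolding compactification_def by auto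
  ultimately show ?thesis
    using fsigmadelta_in_continuous_image[OF _ _ assms(4,6,7)] by simp
qed

end
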